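(* Let $n,d,a,k$ be positive integers and suppose the triple $(n,d,a)$ is bad. Then (1) $(n,kd,a)$ is bad; (2) $(kn,d,a)$ is bad; (3) $(kn,kd,ka)$ is bad.
   Context: For positive integers $N,D,A$, let $R=\mathbb{C}[x_1,\dots,x_N]$ with $\mathfrak{S}_N$ permuting variables and $R_A^{\mathfrak{S}_N}$ the symmetric polynomials homogeneous of degree $A$. The triple $(N,D,A)$ is good if there exists $f\in R_A^{\mathfrak{S}_N}$ such that $x_1^D-x_N^D,\dots,x_{N-1}^D-x_N^D,f$ is a regular sequence (equivalently, $f$ has no zero on $\mathcal{V}_D=\{(z_1,\dots,z_N)\in\mathbb{C}^N: z_i^D=1\ \forall i,\ z_N=1\}$); otherwise it is bad. *)

theory Defs
  imports Complex_Main "HOL-Combinatorics.Permutations"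
begin

text \<open>Multivariate polynomials are not in the distribution, so a homogeneous polynomial
 of degree A in x_0,...,x_{N-1} is represented by its coefficient function on exponent
 vectors alpha (nat => nat) supported in {..<N} with total degree A.\<close>

definition exps :: "nat \<Rightarrow> nat \<Rightarrow> (nat \<Rightarrow> nat) set" where
  "exps N A = {\<alpha>. (\<forall>i\<ge>N. \<alpha> i = 0) \<and> (\<Sum>i<N. \<alpha> i) = A}"

definition symmetric_coeffs :: "nat \<Rightarrow> ((nat \<Rightarrow> nat) \<Rightarrow> complex) \<Rightarrow> bool" where
  "symmetric_coeffs N c \<longleftrightarrow> (\<forall>\<alpha> \<sigma>. \<sigma> permutes {..<N} \<longrightarrow> c (\<alpha> \<circ> \<sigma>) = c \<alpha>)"

definition hom_eval :: "nat \<Rightarrow> nat \<Rightarrow> ((nat \<Rightarrow> nat) \<Rightarrow> complex) \<Rightarrow> (nat \<Rightarrow> complex) \<Rightarrow> complex" where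
  "hom_eval N A c z = (\<Sum>\<alpha>\<in>exps N A. c \<alpha> * (\<Prod>i<N. z i ^ \<alpha> i))"

text \<open>V_D = {z in C^N : z_i^D = 1 for all i, z_N = 1}; coordinates are indexed 0..N-1,
 points of C^N are functions vanishing outside {..<N}.\<close>
definition V :: "nat \<Rightarrow> nat \<Rightarrow> (nat \<Rightarrow> complex) set" where
  "V N D = {z. (\<forall>i<N. z i ^ D = 1) \<and> z (N - 1) = 1 \<and> (\<forall>i\<ge>N. z i = 0)}"

definition good :: "nat \<Rightarrow> nat \<Rightarrow> nat \<Rightarrow> bool" where
  "good N D A \<longleftrightarrow> (\<exists>c. symmetric_coeffs N c \<and> (\<forall>z\<in>V N D. hom_eval N A c z \<noteq> 0))"

definition bad :: "nat \<Rightarrow> nat \<Rightarrow> nat \<Rightarrow> bool" where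
  "bad N D A \<longleftrightarrow> \<not> good N D A"

end

theory Submission
  imports Defs "HOL-Analysis.Analysis" "HOL-Number_Theory.Cong"
begin

text \<open>
Part (1) holds because \<open>V_D \<subseteq> V_{kD}\<close>. For (2) and (3), fix a \<open>k\<close>-th root of unity \<open>\<omega>\<close> and
substitute into a good polynomial \<open>f\<close> in \<open>kN\<close> variables the point whose \<open>q\<close>-th block of \<open>N\<close>
coordinates is \<open>\<omega>\<^sup>q u\<close>. The result \<open>g(u)\<close> is a symmetric function of \<open>u\<close>, hence given by
symmetric coefficients after averaging over \<open>\<frakS>\<^sub>N\<close>. For (2) take \<open>\<omega> = 1\<close>. For (3) take \<open>\<omega>\<close>
primitive: multiplying \<open>u\<^sub>i\<close> by \<open>\<omega>\<close> permutes the \<open>i\<close>-th coordinates of the blocks cyclically,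
so \<open>g\<close> is invariant under these twists, and averaging over them shows that \<open>g(u) = h(u\<^sup>k)\<close> for
a polynomial \<open>h\<close> of degree \<open>a\<close>. Given \<open>z \<in> V_D\<close>, choosing \<open>k\<close>-th roots \<open>u\<close> of \<open>z\<close> with last
coordinate \<open>\<omega>\<close> gives a substituted point in \<open>V_{kD}\<close>, so \<open>h(z) = f(\<dots>) \<noteq> 0\<close>.
\<close>

lemma finite_exps: "finite (exps N A)"
proof -
  have "exps N A \<subseteq> {f. \<forall>x. (x \<in> {..<N} \<longrightarrow> f x \<in> {..A}) \<and> (x \<notin> {..<N} \<longrightarrow> f x = 0)}"
  proof
    fix \<alpha> assume \<alpha>: "\<alpha> \<in> exps N A"
    have "\<alpha> x \<le> A" if "x < N" for x
    proof -
      have "\<alpha> x \<le> (\<Sum>i<N. \<alpha> i)" using that by (intro member_le_sum) auto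
      thus ?thesis using \<alpha> by (simp add: exps_def)
    qed
    thus "\<alpha> \<in> {f. \<forall>x. (x \<in> {..<N} \<longrightarrow> f x \<in> {..A}) \<and> (x \<notin> {..<N} \<longrightarrow> f x = 0)}"
      using \<alpha> by (auto simp: exps_def)
  qed
  thus ?thesis by (rule finite_subset) (rule finite_set_of_finite_funs; simp)
qed

lemma hom_eval_cong:
  "(\<And>i. i < N \<Longrightarrow> z i = z' i) \<Longrightarrow> hom_eval N A c z = hom_eval N A c z'"
  unfolding hom_eval_def by (intro sum.cong refl arg_cong2[where f="(*)"] prod.cong) auto

lemma hom_eval_sum_coeffs:
  "finite X \<Longrightarrow> hom_eval N A (\<lambda>\<beta>. \<Sum>x\<in>X. g x \<beta>) z = (\<Sum>x\<in>X. hom_eval N A (g x) z)"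
  unfolding hom_eval_def by (simp add: sum_distrib_right sum.swap[of _ X])

lemma hom_eval_mult_coeffs: "hom_eval N A (\<lambda>\<beta>. r * c \<beta>) z = r * hom_eval N A c z"
  unfolding hom_eval_def by (simp add: sum_distrib_left mult.assoc)

subsection \<open>Symmetric polynomials\<close>

lemma bij_betw_exps_permute:
  assumes \<sigma>: "\<sigma> permutes {..<N}"
  shows "bij_betw (\<lambda>\<beta>. \<beta> \<circ> \<sigma>) (exps N A) (exps N A)"
proof -
  have closed: "\<beta> \<circ> p \<in> exps N A" if p: "p permutes {..<N}" and \<beta>: "\<beta> \<in> exps N A" for \<beta> p
  proof -
    have "(\<Sum>i<N. \<beta> (p i)) = (\<Sum>i<N. \<beta> i)"
      using sum.permute[OF p, of \<beta>] by (simp add: comp_def)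
    moreover have "\<forall>i\<ge>N. \<beta> (p i) = 0" using \<beta> p by (auto simp: exps_def permutes_not_in)
    ultimately show ?thesis using \<beta> by (simp add: exps_def)
  qed
  show ?thesis
  proof (rule bij_betwI[where g="\<lambda>\<beta>. \<beta> \<circ> inv \<sigma>"])
    show "(\<lambda>\<beta>. \<beta> \<circ> \<sigma>) \<in> exps N A \<rightarrow> exps N A" using closed[OF \<sigma>] by auto
    show "(\<lambda>\<beta>. \<beta> \<circ> inv \<sigma>) \<in> exps N A \<rightarrow> exps N A" using closed[OF permutes_inv[OF \<sigma>]] by auto
    show "\<beta> \<circ> \<sigma> \<circ> inv \<sigma> = \<beta>" for \<beta>
      using permutes_surj[OF \<sigma>] by (simp add: comp_assoc surj_iff)
    show "\<beta> \<circ> inv \<sigma> \<circ> \<sigma> = \<beta>" for \<beta>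
      using permutes_inj[OF \<sigma>] by (simp add: comp_assoc inj_iff)
  qed
qed

lemma hom_eval_permute_coeffs:
  assumes \<sigma>: "\<sigma> permutes {..<N}"
  shows "hom_eval N A (\<lambda>\<beta>. c (\<beta> \<circ> \<sigma>)) z = hom_eval N A c (z \<circ> \<sigma>)"
proof -
  let ?term = "\<lambda>\<gamma>. c \<gamma> * (\<Prod>i<N. (z \<circ> \<sigma>) i ^ \<gamma> i)"
  have "(\<Prod>i<N. z i ^ \<beta> i) = (\<Prod>i<N. (z \<circ> \<sigma>) i ^ (\<beta> \<circ> \<sigma>) i)" for \<beta>
    using prod.permute[OF \<sigma>, of "\<lambda>i. z i ^ \<beta> i"] by (simp add: comp_def)
  hence "hom_eval N A (\<lambda>\<beta>. c (\<beta> \<circ> \<sigma>)) z = (\<Sum>\<beta>\<in>exps N A. ?term (\<beta> \<circ> \<sigma>))"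
    unfolding hom_eval_def by simp
  also have "\<dots> = (\<Sum>\<gamma>\<in>exps N A. ?term \<gamma>)"
    by (rule sum.reindex_bij_betw[OF bij_betw_exps_permute[OF \<sigma>]])
  finally show ?thesis unfolding hom_eval_def .
qed

lemma hom_eval_permute:
  assumes "symmetric_coeffs N c" "\<sigma> permutes {..<N}"
  shows "hom_eval N A c (z \<circ> \<sigma>) = hom_eval N A c z"
  using hom_eval_permute_coeffs[OF assms(2), of A c z] assms unfolding symmetric_coeffs_def by simp

lemma symmetrize_coeffs:
  assumes inv: "\<And>\<sigma> z. \<sigma> permutes {..<N} \<Longrightarrow> hom_eval N A c (z \<circ> \<sigma>) = hom_eval N A c z"
  obtains c' where "symmetric_coeffs N c'" "\<And>z. hom_eval N A c' z = hom_eval N A c z"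
proof
  define P where "P = {\<sigma>. \<sigma> permutes {..<N}}"
  have "finite P" unfolding P_def by (rule finite_permutations) simp
  moreover have "id \<in> P" unfolding P_def by (simp add: permutes_id)
  ultimately have card_P: "card P \<noteq> 0" by auto
  define c' where "c' = (\<lambda>\<beta>. (1 / of_nat (card P)) * (\<Sum>\<sigma>\<in>P. c (\<beta> \<circ> \<sigma>)))"
  show "hom_eval N A c' z = hom_eval N A c z" for z
  proof -
    have "hom_eval N A c' z = (1 / of_nat (card P)) * (\<Sum>\<sigma>\<in>P. hom_eval N A (\<lambda>\<beta>. c (\<beta> \<circ> \<sigma>)) z)"
      unfolding c'_def hom_eval_mult_coeffs hom_eval_sum_coeffs[OF \<open>finite P\<close>] ..
    also have "\<dots> = (1 / of_nat (card P)) * (\<Sum>\<sigma>\<in>P. hom_eval N A c z)"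
      by (intro arg_cong2[where f="(*)"] refl sum.cong) (auto simp: P_def hom_eval_permute_coeffs inv)
    finally show ?thesis using card_P by simp
  qed
  show "symmetric_coeffs N c'"
    unfolding symmetric_coeffs_def
  proof (intro allI impI)
    fix \<alpha> \<tau> assume "\<tau> permutes {..<N}"
    hence "(\<Sum>\<sigma>\<in>P. c (\<alpha> \<circ> \<sigma>)) = (\<Sum>\<sigma>\<in>P. c (\<alpha> \<circ> (\<tau> \<circ> \<sigma>)))"
      unfolding P_def by (rule setum_permutations_compose_left)
    thus "c' (\<alpha> \<circ> \<tau>) = c' \<alpha>" unfolding c'_def by (simp add: comp_assoc)
  qed
qed

lemma good_if_permutation_invariant:
  assumes "\<And>\<sigma> z. \<sigma> permutes {..<N} \<Longrightarrow> hom_eval N A c (z \<circ> \<sigma>) = hom_eval N A c z"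
    and "\<And>z. z \<in> V N D \<Longrightarrow> hom_eval N A c z \<noteq> 0"
  shows "good N D A"
  using symmetrize_coeffs[of N A c] assms unfolding good_def by metis

lemma prod_power_compose:
  fixes m :: "nat \<Rightarrow> nat" and z :: "nat \<Rightarrow> 'a::comm_monoid_mult"
  assumes m: "m ` {..<M} \<subseteq> {..<N}"
  shows "(\<Prod>j<M. z (m j) ^ \<alpha> j) = (\<Prod>i<N. z i ^ (\<Sum>j | j < M \<and> m j = i. \<alpha> j))"
proof -
  have "(\<Prod>j<M. z (m j) ^ \<alpha> j) = (\<Prod>i<N. \<Prod>j | j \<in> {..<M} \<and> m j = i. z (m j) ^ \<alpha> j)"
    by (rule prod.group[OF _ _ m, symmetric]) auto
  also have "\<dots> = (\<Prod>i<N. \<Prod>j | j < M \<and> m j = i. z i ^ \<alpha> j)"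
    by (intro prod.cong refl) auto
  finally show ?thesis by (simp add: power_sum)
qed

lemma hom_eval_substitution:
  assumes m: "\<And>j. j < M \<Longrightarrow> m j < N"
  obtains c' where "\<And>z. hom_eval M A c (\<lambda>j. s j * z (m j)) = hom_eval N A c' z"
proof
  define push where "push = (\<lambda>\<alpha>::nat\<Rightarrow>nat. \<lambda>i. \<Sum>j | j < M \<and> m j = i. \<alpha> j)"
  define c' where "c' = (\<lambda>\<beta>. \<Sum>\<alpha> | \<alpha> \<in> exps M A \<and> push \<alpha> = \<beta>. c \<alpha> * (\<Prod>j<M. s j ^ \<alpha> j))"
  have img: "m ` {..<M} \<subseteq> {..<N}" using m by auto
  have push_exps: "push \<alpha> \<in> exps N A" if "\<alpha> \<in> exps M A" for \<alpha>
  proof -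
    have "{j. j < M \<and> m j = i} = {}" if "N \<le> i" for i using m that by force
    hence "\<forall>i\<ge>N. push \<alpha> i = 0" unfolding push_def by (metis sum.empty)
    moreover have "(\<Sum>i<N. push \<alpha> i) = (\<Sum>j<M. \<alpha> j)"
      using sum.group[OF finite_lessThan finite_lessThan img, of \<alpha>] by (simp add: push_def)
    ultimately show ?thesis using that by (simp add: exps_def)
  qed
  fix z
  have "hom_eval M A c (\<lambda>j. s j * z (m j))
      = (\<Sum>\<alpha>\<in>exps M A. c \<alpha> * (\<Prod>j<M. s j ^ \<alpha> j) * (\<Prod>i<N. z i ^ push \<alpha> i))"
    unfolding hom_eval_def push_def
    by (intro sum.cong refl) (simp add: power_mult_distrib prod.distrib prod_power_compose[OF img] mult.assoc)
  also have "\<dots> = (\<Sum>\<beta>\<in>exps N A. \<Sum>\<alpha> | \<alpha> \<in> exps M A \<and> push \<alpha> = \<beta>.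
                      c \<alpha> * (\<Prod>j<M. s j ^ \<alpha> j) * (\<Prod>i<N. z i ^ push \<alpha> i))"
    by (rule sum.group[symmetric]) (auto simp: finite_exps push_exps)
  also have "\<dots> = hom_eval N A c' z"
    unfolding hom_eval_def c'_def sum_distrib_right by (intro sum.cong refl) auto
  finally show "hom_eval M A c (\<lambda>j. s j * z (m j)) = hom_eval N A c' z" .
qed

subsection \<open>Roots of unity\<close>

definition unit_root :: "nat \<Rightarrow> complex" where
  "unit_root k = exp (2 * of_real pi * \<i> / of_nat k)"

lemma unit_root_power_eq_1_iff: "k > 0 \<Longrightarrow> unit_root k ^ g = 1 \<longleftrightarrow> k dvd g"
proof -
  assume k: "k > 0"
  have "unit_root k ^ g = exp (of_nat g * (2 * of_real pi * \<i> / of_nat k))"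
    unfolding unit_root_def by (rule exp_of_nat_mult[symmetric])
  also have "\<dots> = exp (2 * of_real pi * \<i> * of_nat g / of_nat k)" by (simp add: field_simps)
  finally show ?thesis using complex_root_unity_eq_1[of k g] k by simp
qed

lemma unit_root_power_self: "k > 0 \<Longrightarrow> unit_root k ^ k = 1"
  using unit_root_power_eq_1_iff[of k k] by simp

lemma sum_unit_root_powers:
  assumes k: "k > 0"
  shows "(\<Sum>x<k. unit_root k ^ (x * g)) = (if k dvd g then of_nat k else 0)"
proof -
  have sum_eq: "(\<Sum>x<k. unit_root k ^ (x * g)) = (\<Sum>x<k. (unit_root k ^ g) ^ x)"
    by (simp add: power_mult[symmetric] mult.commute)
  show ?thesis
  proof (cases "k dvd g")
    case True
    hence "unit_root k ^ g = 1" using unit_root_power_eq_1_iff[OF k] by simp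
    thus ?thesis using True sum_eq by simp
  next
    case False
    hence "unit_root k ^ g \<noteq> 1" using unit_root_power_eq_1_iff[OF k] by simp
    moreover have "(unit_root k ^ g) ^ k = (unit_root k ^ k) ^ g"
      by (simp only: power_mult[symmetric] mult.commute)
    ultimately show ?thesis
      using False sum_eq unit_root_power_self[OF k] geometric_sum[of "unit_root k ^ g" k] by simp
  qed
qed

lemma power_mod_eq:
  fixes \<omega> :: "'a::monoid_mult"
  assumes "\<omega> ^ k = 1"
  shows "\<omega> ^ (x mod k) = \<omega> ^ x"
proof -
  have "\<omega> ^ x = \<omega> ^ (k * (x div k) + x mod k)" by simp
  also have "\<dots> = (\<omega> ^ k) ^ (x div k) * \<omega> ^ (x mod k)" by (simp only: power_add power_mult)
  finally show ?thesis using assms by simp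
qed

subsection \<open>Polynomials invariant under twisting by roots of unity\<close>

text \<open>Averaging over the twists \<open>u\<^sub>i \<mapsto> \<omega>^e\<^sub>i u\<^sub>i\<close> with \<open>e \<in> {..<k}^n\<close> multiplies the coefficient
of \<open>u^\<gamma>\<close> by \<open>\<Prod>\<^sub>i \<Sum>\<^sub>x\<^sub><\<^sub>k \<omega>^(x \<gamma>\<^sub>i)\<close>, which is \<open>k^n\<close> if \<open>k\<close> divides every \<open>\<gamma>\<^sub>i\<close> and \<open>0\<close> otherwise.\<close>
lemma hom_eval_twist_invariant_divisible_exponents:
  assumes k: "k > 0"
    and inv: "\<And>e u. hom_eval n B c (\<lambda>i. unit_root k ^ e i * u i) = hom_eval n B c u"
  shows "hom_eval n B c u = hom_eval n B (\<lambda>\<gamma>. if \<forall>i<n. k dvd \<gamma> i then c \<gamma> else 0) u"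
proof -
  define \<omega> where "\<omega> = unit_root k"
  define E where "E = PiE {..<n} (\<lambda>_. {..<k})"
  have "card E = k ^ n" unfolding E_def by (simp add: card_PiE)
  have character: "(\<Sum>e\<in>E. \<Prod>i<n. \<omega> ^ (e i * \<gamma> i)) = (if \<forall>i<n. k dvd \<gamma> i then of_nat (k ^ n) else 0)"
    for \<gamma>
  proof -
    have "(\<Sum>e\<in>E. \<Prod>i<n. \<omega> ^ (e i * \<gamma> i)) = (\<Prod>i<n. \<Sum>x<k. \<omega> ^ (x * \<gamma> i))"
      unfolding E_def by (rule prod_sum_PiE[symmetric]) auto
    also have "\<dots> = (\<Prod>i<n. if k dvd \<gamma> i then of_nat k else 0)"
      unfolding \<omega>_def using sum_unit_root_powers[OF k] by simp
    finally show ?thesis by (auto simp: prod_zero_iff)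
  qed
  have "of_nat (k ^ n) * hom_eval n B c u = (\<Sum>e\<in>E. hom_eval n B c (\<lambda>i. \<omega> ^ e i * u i))"
    using inv \<open>card E = k ^ n\<close> by (simp add: \<omega>_def)
  also have "\<dots> = (\<Sum>e\<in>E. \<Sum>\<gamma>\<in>exps n B. c \<gamma> * (\<Prod>i<n. \<omega> ^ (e i * \<gamma> i)) * (\<Prod>i<n. u i ^ \<gamma> i))"
    unfolding hom_eval_def
    by (intro sum.cong refl) (simp add: power_mult_distrib prod.distrib power_mult mult.assoc)
  also have "\<dots> = (\<Sum>\<gamma>\<in>exps n B. c \<gamma> * (\<Sum>e\<in>E. \<Prod>i<n. \<omega> ^ (e i * \<gamma> i)) * (\<Prod>i<n. u i ^ \<gamma> i))"
    by (subst sum.swap) (simp add: sum_distrib_left sum_distrib_right)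
  also have "\<dots> = of_nat (k ^ n) * hom_eval n B (\<lambda>\<gamma>. if \<forall>i<n. k dvd \<gamma> i then c \<gamma> else 0) u"
    unfolding hom_eval_def character sum_distrib_left by (intro sum.cong refl) auto
  finally show ?thesis using k by simp
qed

lemma hom_eval_divisible_exponents:
  assumes k: "k > 0"
  shows "hom_eval n (k * a) (\<lambda>\<gamma>. if \<forall>i<n. k dvd \<gamma> i then c \<gamma> else 0) u
       = hom_eval n a (\<lambda>\<beta>. c (\<lambda>i. k * \<beta> i)) (\<lambda>i. u i ^ k)"
proof -
  define c' where "c' = (\<lambda>\<gamma>. if \<forall>i<n. k dvd \<gamma> i then c \<gamma> else 0)"
  define h where "h = (\<lambda>(\<beta>::nat\<Rightarrow>nat) i. k * \<beta> i)"
  have "inj_on h (exps n a)" unfolding h_def inj_on_def using k by (auto simp: fun_eq_iff)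
  have h_exps: "h ` exps n a \<subseteq> exps n (k * a)"
    by (auto simp: h_def exps_def sum_distrib_left[symmetric])
  have "\<gamma> \<in> h ` exps n a" if "\<gamma> \<in> exps n (k * a)" "\<forall>i<n. k dvd \<gamma> i" for \<gamma>
  proof
    define \<beta> where "\<beta> = (\<lambda>i. \<gamma> i div k)"
    show \<gamma>: "\<gamma> = h \<beta>"
    proof
      fix i show "\<gamma> i = h \<beta> i"
        using that by (cases "i < n") (auto simp: h_def \<beta>_def exps_def)
    qed
    have "k * (\<Sum>i<n. \<beta> i) = k * a"
      using that \<gamma> by (simp add: exps_def h_def sum_distrib_left)
    thus "\<beta> \<in> exps n a" using that k by (auto simp: exps_def \<beta>_def)
  qed
  hence "hom_eval n (k * a) c' u = (\<Sum>\<gamma>\<in>h ` exps n a. c' \<gamma> * (\<Prod>i<n. u i ^ \<gamma> i))"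
    unfolding hom_eval_def by (intro sum.mono_neutral_right[OF finite_exps h_exps]) (auto simp: c'_def)
  also have "\<dots> = (\<Sum>\<beta>\<in>exps n a. c' (h \<beta>) * (\<Prod>i<n. u i ^ h \<beta> i))"
    by (rule sum.reindex_cong[OF \<open>inj_on h (exps n a)\<close> refl]) simp
  also have "\<dots> = hom_eval n a (\<lambda>\<beta>. c (\<lambda>i. k * \<beta> i)) (\<lambda>i. u i ^ k)"
    unfolding hom_eval_def by (intro sum.cong refl) (simp add: c'_def h_def power_mult)
  finally show ?thesis unfolding c'_def .
qed

subsection \<open>Substituting block points\<close>

definition block_point :: "nat \<Rightarrow> nat \<Rightarrow> complex \<Rightarrow> (nat \<Rightarrow> complex) \<Rightarrow> nat \<Rightarrow> complex" where
  "block_point k n \<omega> u j = (if j < k * n then \<omega> ^ (j div n) * u (j mod n) else 0)"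

lemma block_permutes:
  fixes \<rho> :: "nat \<Rightarrow> nat" and \<pi> :: "nat \<Rightarrow> nat \<Rightarrow> nat"
  assumes n: "n > 0"
    and \<rho>_inj: "inj_on \<rho> {..<n}" and \<rho>_bound: "\<And>r. r < n \<Longrightarrow> \<rho> r < n"
    and \<pi>_inj: "\<And>r. r < n \<Longrightarrow> inj_on (\<pi> r) {..<k}"
    and \<pi>_bound: "\<And>r q. r < n \<Longrightarrow> q < k \<Longrightarrow> \<pi> r q < k"
  shows "(\<lambda>j. if j < k * n then \<rho> (j mod n) + n * \<pi> (j mod n) (j div n) else j) permutes {..<k * n}"
    (is "?t permutes _")
proof (rule bij_imp_permutes)
  show "?t j = j" if "j \<notin> {..<k * n}" for j using that by simp
  have div_bound: "j div n < k" if "j < k * n" for j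
    using that n by (simp add: div_less_iff_less_mult mult.commute)
  have "r + n * q < k * n" if "r < n" "q < k" for r q
  proof -
    have "r + n * q < n * Suc q" using that by simp
    also have "\<dots> \<le> n * k" using that by (intro mult_le_mono2) simp
    finally show ?thesis by (simp add: mult.commute)
  qed
  hence maps_to: "?t ` {..<k * n} \<subseteq> {..<k * n}"
    using \<rho>_bound \<pi>_bound div_bound n by auto
  have "inj_on ?t {..<k * n}"
  proof (rule inj_onI)
    fix j j' assume j: "j \<in> {..<k * n}" and j': "j' \<in> {..<k * n}" and eq: "?t j = ?t j'"
    have r: "j mod n < n" "j' mod n < n" using n by auto
    have sum_eq: "\<rho> (j mod n) + n * \<pi> (j mod n) (j div n) = \<rho> (j' mod n) + n * \<pi> (j' mod n) (j' div n)"
      using eq j j' by simp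
    have "\<rho> (j mod n) = (\<rho> (j mod n) + n * \<pi> (j mod n) (j div n)) mod n"
      using \<rho>_bound[OF r(1)] by simp
    also have "\<dots> = \<rho> (j' mod n)"
      unfolding sum_eq using \<rho>_bound[OF r(2)] by simp
    finally have "\<rho> (j mod n) = \<rho> (j' mod n)" .
    hence mod_eq: "j mod n = j' mod n" using \<rho>_inj r by (auto dest: inj_onD)
    hence "\<pi> (j mod n) (j div n) = \<pi> (j mod n) (j' div n)" using sum_eq n by simp
    hence div_eq: "j div n = j' div n" using \<pi>_inj[OF r(1)] div_bound j j' by (auto dest: inj_onD)
    show "j = j'" using mod_eq div_eq by (metis div_mult_mod_eq)
  qed
  thus "bij_betw ?t {..<k * n} {..<k * n}"
    unfolding bij_betw_def using endo_inj_surj[OF _ maps_to] by simp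
qed

lemma hom_eval_block_point:
  assumes "n > 0"
  obtains c' where "\<And>u. hom_eval (k * n) A c (block_point k n \<omega> u) = hom_eval n A c' u"
proof -
  obtain c' where c': "\<And>u. hom_eval (k * n) A c (\<lambda>j. \<omega> ^ (j div n) * u (j mod n)) = hom_eval n A c' u"
    by (rule hom_eval_substitution[where M="k * n" and N=n and A=A and c=c and m="\<lambda>j. j mod n" and s="\<lambda>j. \<omega> ^ (j div n)"])
      (use assms in auto)
  have "hom_eval (k * n) A c (block_point k n \<omega> u) = hom_eval n A c' u" for u
    by (subst c'[symmetric], rule hom_eval_cong) (simp add: block_point_def)
  thus ?thesis by (rule that)
qed

lemma hom_eval_block_point_permute:
  assumes n: "n > 0" and c: "symmetric_coeffs (k * n) c" and \<sigma>: "\<sigma> permutes {..<n}"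
  shows "hom_eval (k * n) A c (block_point k n \<omega> (u \<circ> \<sigma>)) = hom_eval (k * n) A c (block_point k n \<omega> u)"
proof -
  let ?t = "\<lambda>j. if j < k * n then \<sigma> (j mod n) + n * (j div n) else j"
  have t: "?t permutes {..<k * n}"
    using block_permutes[OF n, where \<rho>=\<sigma> and \<pi>="\<lambda>r q. q"]
      permutes_inj_on[OF \<sigma>] permutes_in_image[OF \<sigma>] by simp
  moreover have "block_point k n \<omega> (u \<circ> \<sigma>) = block_point k n \<omega> u \<circ> ?t"
  proof
    fix j
    have "\<sigma> (j mod n) < n" using permutes_in_image[OF \<sigma>] n by simp
    moreover have "?t j < k * n" if "j < k * n" using that permutes_in_image[OF t, of j] by simp
    ultimately show "block_point k n \<omega> (u \<circ> \<sigma>) j = (block_point k n \<omega> u \<circ> ?t) j"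
      by (cases "j < k * n") (simp_all add: block_point_def)
  qed
  ultimately show ?thesis by (simp add: hom_eval_permute[OF c])
qed

text \<open>Multiplying \<open>u\<^sub>i\<close> by \<open>\<omega>\<^sup>e\<close> shifts the \<open>i\<close>-th coordinates of the \<open>k\<close> blocks cyclically by \<open>e\<close>.\<close>
lemma hom_eval_block_point_twist:
  assumes n: "n > 0" and k: "k > 0" and c: "symmetric_coeffs (k * n) c" and \<omega>: "\<omega> ^ k = 1"
  shows "hom_eval (k * n) A c (block_point k n \<omega> (\<lambda>i. \<omega> ^ e i * u i))
       = hom_eval (k * n) A c (block_point k n \<omega> u)"
proof -
  let ?t = "\<lambda>j. if j < k * n then j mod n + n * ((j div n + e (j mod n)) mod k) else j"
  have "inj_on (\<lambda>q. (q + e r) mod k) {..<k}" for r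
  proof (rule inj_onI)
    fix q q' assume "q \<in> {..<k}" "q' \<in> {..<k}" and "(q + e r) mod k = (q' + e r) mod k"
    hence "[q = q'] (mod k)" by (simp only: cong_def [symmetric] cong_add_rcancel_nat)
    thus "q = q'" using \<open>q \<in> {..<k}\<close> \<open>q' \<in> {..<k}\<close> by (simp add: cong_less_modulus_unique_nat)
  qed
  hence t: "?t permutes {..<k * n}"
    using block_permutes[OF n, where \<rho>="\<lambda>r. r" and \<pi>="\<lambda>r q. (q + e r) mod k"] k by simp
  moreover have "block_point k n \<omega> (\<lambda>i. \<omega> ^ e i * u i) = block_point k n \<omega> u \<circ> ?t"
  proof
    fix j
    have "?t j < k * n" if "j < k * n" using that permutes_in_image[OF t, of j] by simp
    thus "block_point k n \<omega> (\<lambda>i. \<omega> ^ e i * u i) j = (block_point k n \<omega> u \<circ> ?t) j"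
      using n by (cases "j < k * n") (simp_all add: block_point_def power_mod_eq[OF \<omega>] power_add)
  qed
  ultimately show ?thesis by (simp add: hom_eval_permute[OF c])
qed

lemma block_point_in_V:
  assumes n: "n > 0" and k: "k > 0"
    and "\<omega> ^ D = 1" and "\<And>i. i < n \<Longrightarrow> u i ^ D = 1" and "\<omega> ^ (k - 1) * u (n - 1) = 1"
  shows "block_point k n \<omega> u \<in> V (k * n) D"
proof -
  have last: "k * n - 1 = (n - 1) + n * (k - 1)" using n k
    by (cases k; cases n) (auto simp: algebra_simps)
  have "(k * n - 1) mod n = n - 1" "(k * n - 1) div n = k - 1"
    using n by (simp_all only: last mod_mult_self2 div_mult_self2) simp_all
  moreover have "k * n - 1 < k * n" using n k by simp
  ultimately have "block_point k n \<omega> u (k * n - 1) = 1"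
    using assms(5) by (simp add: block_point_def)
  moreover have "block_point k n \<omega> u j ^ D = 1" if "j < k * n" for j
    using that assms(3,4) n by (simp add: block_point_def power_mult_distrib power_mult[symmetric]
        mult.commute[of "j div n"] power_mult)
  ultimately show ?thesis by (simp add: V_def block_point_def)
qed

lemma hom_eval_block_point_unit_root:
  assumes n: "n > 0" and k: "k > 0" and c: "symmetric_coeffs (k * n) c"
  obtains h where
    "\<And>u. hom_eval n a h (\<lambda>i. u i ^ k) = hom_eval (k * n) (k * a) c (block_point k n (unit_root k) u)"
proof -
  obtain c' where c': "\<And>u. hom_eval (k * n) (k * a) c (block_point k n (unit_root k) u) = hom_eval n (k * a) c' u"
    using hom_eval_block_point[OF n] by blast
  have "hom_eval n (k * a) c' (\<lambda>i. unit_root k ^ e i * u i) = hom_eval n (k * a) c' u" for e u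
    using hom_eval_block_point_twist[OF n k c unit_root_power_self[OF k], of "k * a" e u]
    by (simp add: c')
  from hom_eval_twist_invariant_divisible_exponents[OF k this]
  have "hom_eval n a (\<lambda>\<beta>. c' (\<lambda>i. k * \<beta> i)) (\<lambda>i. u i ^ k)
      = hom_eval (k * n) (k * a) c (block_point k n (unit_root k) u)" for u
    by (simp add: c' hom_eval_divisible_exponents[OF k])
  thus ?thesis by (rule that)
qed

lemma good_of_good_mult_D: "good N (k * D) A \<Longrightarrow> good N D A"
proof -
  have "V N D \<subseteq> V N (k * D)"
    by (auto simp: V_def power_mult mult.commute[of k D])
  thus "good N (k * D) A \<Longrightarrow> good N D A" unfolding good_def by blast
qed

lemma good_of_good_mult_N:
  assumes good: "good (k * n) d a" and n: "n > 0" and k: "k > 0"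
  shows "good n d a"
proof -
  obtain c where c: "symmetric_coeffs (k * n) c"
    and nonzero: "\<forall>z\<in>V (k * n) d. hom_eval (k * n) a c z \<noteq> 0"
    using good unfolding good_def by blast
  obtain c' where c': "\<And>u. hom_eval (k * n) a c (block_point k n 1 u) = hom_eval n a c' u"
    using hom_eval_block_point[OF n] by blast
  show ?thesis
  proof (rule good_if_permutation_invariant[where c=c'])
    show "hom_eval n a c' (z \<circ> \<sigma>) = hom_eval n a c' z" if "\<sigma> permutes {..<n}" for \<sigma> z
      using hom_eval_block_point_permute[OF n c that, of a 1 z] by (simp add: c')
    show "hom_eval n a c' z \<noteq> 0" if "z \<in> V n d" for z
      using block_point_in_V[OF n k, of 1 d z] that nonzero c' by (auto simp: V_def)
  qed
qed

lemma good_of_good_mult_NDA: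
  assumes good: "good (k * n) (k * d) (k * a)" and n: "n > 0" and k: "k > 0"
  shows "good n d a"
proof -
  obtain c where c: "symmetric_coeffs (k * n) c"
    and nonzero: "\<forall>z\<in>V (k * n) (k * d). hom_eval (k * n) (k * a) c z \<noteq> 0"
    using good unfolding good_def by blast
  define \<omega> where "\<omega> = unit_root k"
  have \<omega>: "\<omega> ^ k = 1" using unit_root_power_self[OF k] by (simp add: \<omega>_def)
  obtain h where h: "\<And>u. hom_eval n a h (\<lambda>i. u i ^ k) = hom_eval (k * n) (k * a) c (block_point k n \<omega> u)"
    using hom_eval_block_point_unit_root[OF n k c] unfolding \<omega>_def by blast
  have "\<exists>w. w ^ k = x" for x :: complex
    by (rule exists_complex_root[of k x]) (use k in auto)
  then obtain root :: "complex \<Rightarrow> complex" where root: "\<And>x. root x ^ k = x" by metis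
  show ?thesis
  proof (rule good_if_permutation_invariant[where c=h])
    show "hom_eval n a h (z \<circ> \<sigma>) = hom_eval n a h z" if "\<sigma> permutes {..<n}" for \<sigma> z
    proof -
      have "hom_eval n a h (z \<circ> \<sigma>) = hom_eval n a h (\<lambda>i. (root \<circ> z \<circ> \<sigma>) i ^ k)"
        by (simp add: root comp_def)
      also have "\<dots> = hom_eval (k * n) (k * a) c (block_point k n \<omega> (root \<circ> z \<circ> \<sigma>))"
        by (rule h)
      also have "\<dots> = hom_eval (k * n) (k * a) c (block_point k n \<omega> (root \<circ> z))"
        by (rule hom_eval_block_point_permute[OF n c that])
      also have "\<dots> = hom_eval n a h z"
        using h[of "root \<circ> z"] by (simp add: root comp_def)
      finally show ?thesis .
    qed
    show "hom_eval n a h z \<noteq> 0" if "z \<in> V n d" for z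
    proof -
      define u where "u = (root \<circ> z)(n - 1 := \<omega>)"
      have "z = (\<lambda>i. u i ^ k)"
        using that \<omega> root by (auto simp: u_def V_def)
      moreover have "\<omega> ^ (k - 1) * \<omega> = 1" using \<omega> k by (cases k) (simp_all add: mult.commute)
      hence "block_point k n \<omega> u \<in> V (k * n) (k * d)"
        using that \<omega>
        by (intro block_point_in_V[OF n k]) (auto simp: V_def u_def root power_mult)
      ultimately show ?thesis using h[of u] nonzero by simp
    qed
  qed
qed

theorem proposition3p22:
  fixes n d a k :: nat
  assumes "n > 0" and "d > 0" and "a > 0" and "k > 0"
    and "bad n d a"
  shows "bad n (k * d) a \<and> bad (k * n) d a \<and> bad (k * n) (k * d) (k * a)"
  using assms good_of_good_mult_D[of n k d a] good_of_good_mult_N[of k n d a]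
    good_of_good_mult_NDA[of k n d a]
  unfolding bad_def by blast

end
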